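(* Let $C_0>0$ and $\mathcal{U}_0=e^{C_0}/(1+e^{C_0})^2$. For $m\in\mathcal{M}$, let $$\hat f_m=\arg\min_{t\in \mathcal{S}_m\cap \mathbb{L}_\infty(C_0)}\gamma_n(t),\qquad f_m=\arg\min_{t\in \mathcal{S}_m\cap \mathbb{L}_\infty(C_0)}\gamma(t).$$ Then $$\mathbb{E}_{f_0}\big[\mathcal{K}(\mathbb{P}_{f_0}^{(n)},\mathbb{P}_{\hat f_m}^{(n)})\big]\le \mathcal{K}(\mathbb{P}_{f_0}^{(n)},\mathbb{P}_{f_m}^{(n)})+\frac{D_m}{2n\,\mathcal{U}_0^2}.$$
   Context: Observations $(Y_1,x_1),\dots,(Y_n,x_n)\in\{0,1\}\times\mathcal{X}$ with deterministic design points $x_i$ and independent $Y_i$ satisfying $\mathbb{E}_{f_0}(Y_i)=\pi_{f_0}(x_i)$, where for a function $f:\mathcal{X}\to\mathbb{R}$, $\pi_f(x)=e^{f(x)}/(1+e^{f(x)})$, and $f_0$ is an unknown function. $\mathbb{P}^{(n)}_f$ denotes the law of $(Y_1,\dots,Y_n)$ when $Y_i$ are independent Bernoulli$(\pi_f(x_i))$. The contrast is $\gamma_n(f)=\frac1n\sum_{i=1}^n\{\log(1+e^{f(x_i)})-Y_if(x_i)\}$ and $\gamma(f)=\mathbb{E}_{f_0}[\gamma_n(f)]$. The normalized Kullback–Leibler divergence is $\mathcal{K}(\mathbb{P}_{f_0}^{(n)},\mathbb{P}_{f}^{(n)})=\frac1n\sum_{i=1}^n\big[\pi_{f_0}(x_i)\log\frac{\pi_{f_0}(x_i)}{\pi_f(x_i)}+(1-\pi_{f_0}(x_i))\log\frac{1-\pi_{f_0}(x_i)}{1-\pi_f(x_i)}\big]$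 $(=\gamma(f)-\gamma(f_0))$. A dictionary $\{\phi_1,\dots,\phi_M\}$ of functions $\mathcal{X}\to\mathbb{R}$, orthonormal for the empirical inner product $\langle f,g\rangle_n=\frac1n\sum_{i}f(x_i)g(x_i)$, is fixed; $\mathcal{M}$ is the set of subsets $m\subset\{1,\dots,M\}$, $\mathcal{S}_m=\{\sum_{j\in m}\beta_j\phi_j\}$ and $D_m$ is the dimension of $\mathrm{span}\{\phi_j,j\in m\}$. For $C_0>0$, $\mathbb{L}_\infty(C_0)=\{f:\mathcal{X}\to\mathbb{R}:\max_{1\le i\le n}|f(x_i)|\le C_0\}$. *)

theory Defs
  imports "HOL-Analysis.Analysis" "HOL-Library.Function_Algebras"
begin

definition pi_l :: "real \<Rightarrow> real" where
  "pi_l t = exp t / (1 + exp t)"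

definition outcomes :: "nat \<Rightarrow> (nat \<Rightarrow> real) set" where
  "outcomes n = PiE {..<n} (\<lambda>_. {0, 1})"

definition probY :: "nat \<Rightarrow> (nat \<Rightarrow> 'x) \<Rightarrow> ('x \<Rightarrow> real) \<Rightarrow> (nat \<Rightarrow> real) \<Rightarrow> real" where
  "probY n x f Y = (\<Prod>i<n. if Y i = 1 then pi_l (f (x i)) else 1 - pi_l (f (x i)))"

definition expect :: "nat \<Rightarrow> (nat \<Rightarrow> 'x) \<Rightarrow> ('x \<Rightarrow> real) \<Rightarrow> ((nat \<Rightarrow> real) \<Rightarrow> real) \<Rightarrow> real" where
  "expect n x f Z = (\<Sum>Y\<in>outcomes n. probY n x f Y * Z Y)"

definition gamma_n :: "nat \<Rightarrow> (nat \<Rightarrow> 'x) \<Rightarrow> (nat \<Rightarrow> real) \<Rightarrow> ('x \<Rightarrow> real) \<Rightarrow> real" where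
  "gamma_n n x Y f = (1 / real n) * (\<Sum>i<n. ln (1 + exp (f (x i))) - Y i * f (x i))"

definition gamma :: "nat \<Rightarrow> (nat \<Rightarrow> 'x) \<Rightarrow> ('x \<Rightarrow> real) \<Rightarrow> ('x \<Rightarrow> real) \<Rightarrow> real" where
  "gamma n x f0 f = expect n x f0 (\<lambda>Y. gamma_n n x Y f)"

definition KL :: "nat \<Rightarrow> (nat \<Rightarrow> 'x) \<Rightarrow> ('x \<Rightarrow> real) \<Rightarrow> ('x \<Rightarrow> real) \<Rightarrow> real" where
  "KL n x f0 f = (1 / real n) * (\<Sum>i<n.
      pi_l (f0 (x i)) * ln (pi_l (f0 (x i)) / pi_l (f (x i)))
    + (1 - pi_l (f0 (x i))) * ln ((1 - pi_l (f0 (x i))) / (1 - pi_l (f (x i)))))"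

definition inner_n :: "nat \<Rightarrow> (nat \<Rightarrow> 'x) \<Rightarrow> ('x \<Rightarrow> real) \<Rightarrow> ('x \<Rightarrow> real) \<Rightarrow> real" where
  "inner_n n x f g = (1 / real n) * (\<Sum>i<n. f (x i) * g (x i))"

definition S_m :: "(nat \<Rightarrow> 'x \<Rightarrow> real) \<Rightarrow> nat set \<Rightarrow> ('x \<Rightarrow> real) set" where
  "S_m phi m = {f. \<exists>\<beta>. f = (\<lambda>z. \<Sum>j\<in>m. \<beta> j * phi j z)}"

definition Linf :: "nat \<Rightarrow> (nat \<Rightarrow> 'x) \<Rightarrow> real \<Rightarrow> ('x \<Rightarrow> real) set" where
  "Linf n x C0 = {f. \<forall>i<n. \<bar>f (x i)\<bar> \<le> C0}"

definition D_m :: "(nat \<Rightarrow> 'x \<Rightarrow> real) \<Rightarrow> nat set \<Rightarrow> nat" where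
  "D_m phi m = vector_space.dim (\<lambda>c (f::'x \<Rightarrow> real). (\<lambda>z. c * f z))
                 (phi ` m)"

end

theory Submission
  imports Defs
begin

text \<open>The midpoint of \<open>fhat Y\<close> and \<open>fm\<close> lies in the convex model, so the
  minimality of \<open>fhat Y\<close> together with the strong convexity of \<open>t \<mapsto> ln (1 + exp t)\<close> on
  \<open>[-C0, C0]\<close> (curvature at least \<open>\<U>\<^sub>0\<close>) shows that the empirical contrast at \<open>fhat Y\<close> lies
  below that at \<open>fm\<close> by \<open>\<U>\<^sub>0/4 \<parallel>fhat Y - fm\<parallel>\<^sub>n\<^sup>2\<close>. The Kullback-Leibler divergence is the
  contrast with \<open>Y\<^sub>i\<close> replaced by its mean \<open>\<pi>\<^sub>i\<close>, so the two differences only differ by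
  \<open>1/n \<Sum>\<^sub>i (Y\<^sub>i - \<pi>\<^sub>i) (fhat Y - fm)(x\<^sub>i)\<close>. In the orthonormal coordinates this noise term is linear
  in the coefficients of \<open>fhat Y - fm\<close> while the norm is their sum of squares; AM-GM leaves
  \<open>\<Sum>\<^sub>j E\<^sub>j\<^sup>2 / (\<U>\<^sub>0 n\<^sup>2)\<close> with \<open>E\<^sub>j = \<Sum>\<^sub>i (Y\<^sub>i - \<pi>\<^sub>i) \<phi>\<^sub>j(x\<^sub>i)\<close>. Each \<open>E\<^sub>j\<close> has variance at most
  \<open>n\<close>, which gives \<open>D\<^sub>m / (\<U>\<^sub>0 n) \<le> D\<^sub>m / (2 n \<U>\<^sub>0\<^sup>2)\<close>.\<close>

text \<open>The derivative of \<open>pi_l\<close>; the constant \<open>\<U>\<^sub>0\<close> of the paper is \<open>dpi_l C0\<close>.\<close>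
definition dpi_l :: "real \<Rightarrow> real" where
  "dpi_l t = exp t / (1 + exp t)^2"

lemma one_plus_exp_gt_0 [simp]: "0 < 1 + exp (t::real)"
  by (simp add: add_pos_pos)

lemma one_plus_exp_neq_0 [simp]: "1 + exp (t::real) \<noteq> 0"
  using one_plus_exp_gt_0[of t] by linarith

lemma pi_l_gt_0: "0 < pi_l t"
  by (simp add: pi_l_def add_pos_pos)

lemma pi_l_lt_1: "pi_l t < 1"
  by (simp add: pi_l_def add_pos_pos)

lemma dpi_l_gt_0: "0 < dpi_l t"
  unfolding dpi_l_def by (intro divide_pos_pos) auto

lemma dpi_l_le_quarter: "dpi_l t \<le> 1 / 4"
proof -
  have "4 * exp t \<le> (1 + exp t)^2"
    using sum_squares_ge_zero[of "1 - exp t" 0] by (simp add: power2_eq_square algebra_simps)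
  then show ?thesis by (simp add: dpi_l_def divide_simps add_pos_pos)
qed

lemma pi_l_has_real_derivative: "(pi_l has_real_derivative dpi_l t) (at t)"
  unfolding pi_l_def[abs_def] dpi_l_def
  by (auto intro!: derivative_eq_intros simp: field_simps power2_eq_square)

lemma softplus_has_real_derivative: "((\<lambda>t. ln (1 + exp t)) has_real_derivative pi_l t) (at t)"
  unfolding pi_l_def by (auto intro!: derivative_eq_intros)

text \<open>With \<open>u = exp z\<close> and \<open>E = exp C\<close> the claim is \<open>(E - u) (u E - 1) \<ge> 0\<close>.\<close>
lemma dpi_l_le_of_abs_le:
  assumes "\<bar>z\<bar> \<le> C"
  shows "dpi_l C \<le> dpi_l z"
proof -
  define u E where "u = exp z" and "E = exp C"
  have "u \<le> E" unfolding u_def E_def using assms by simp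
  moreover have "1 \<le> u * E" unfolding u_def E_def using assms by (simp flip: exp_add)
  ultimately have "0 \<le> (E - u) * (u * E - 1)" by simp
  then have "E * (1 + u)^2 \<le> u * (1 + E)^2" by (simp add: power2_eq_square algebra_simps)
  then show ?thesis
    by (simp add: dpi_l_def u_def E_def divide_simps)
qed

lemma pi_l_increment_ge:
  assumes "\<bar>s\<bar> \<le> C" "\<bar>t\<bar> \<le> C" "s \<le> t"
  shows "dpi_l C * (t - s) \<le> pi_l t - pi_l s"
proof (cases "s = t")
  case False
  with assms have "s < t" by simp
  then obtain z where z: "s < z" "z < t" and mvt: "pi_l t - pi_l s = (t - s) * dpi_l z"
    using MVT2[of s t pi_l dpi_l] pi_l_has_real_derivative by blast
  have "\<bar>z\<bar> \<le> C" using z assms by auto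
  then have "dpi_l C * (t - s) \<le> dpi_l z * (t - s)"
    using \<open>s < t\<close> by (intro mult_right_mono dpi_l_le_of_abs_le) auto
  then show ?thesis by (simp add: mvt mult.commute)
qed simp

text \<open>On \<open>[-C, C]\<close> the softplus function \<open>ln (1 + exp t)\<close> minus \<open>dpi_l C t\<^sup>2 / 2\<close> has a
  nondecreasing derivative, hence is convex.\<close>
lemma softplus_midpoint_strongly_convex:
  assumes a: "\<bar>a\<bar> \<le> C" and b: "\<bar>b\<bar> \<le> C"
  shows "ln (1 + exp ((a + b) / 2))
           \<le> (ln (1 + exp a) + ln (1 + exp b)) / 2 - dpi_l C / 8 * (a - b)^2"
proof -
  define g where "g t = ln (1 + exp t) - dpi_l C * t^2 / 2" for t
  have "convex_on {-C..C} g"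
  proof (rule convex_on_realI[where f' = "\<lambda>t. pi_l t - dpi_l C * t"])
    fix t show "(g has_real_derivative pi_l t - dpi_l C * t) (at t)"
      unfolding g_def
      by (rule DERIV_diff[OF softplus_has_real_derivative]) (auto intro!: derivative_eq_intros)
  next
    fix s t :: real assume "s \<in> {-C..C}" "t \<in> {-C..C}" "s \<le> t"
    then have "dpi_l C * (t - s) \<le> pi_l t - pi_l s" by (intro pi_l_increment_ge) auto
    then show "pi_l s - dpi_l C * s \<le> pi_l t - dpi_l C * t" by (simp add: algebra_simps)
  qed simp
  then have "g ((1 - 1/2) *\<^sub>R a + (1/2) *\<^sub>R b) \<le> (1 - 1/2) * g a + (1/2) * g b"
    by (rule convex_onD) (use a b in auto)
  then show ?thesis unfolding g_def by (simp add: power2_eq_square field_simps)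
qed

lemma probY_nonneg: "0 \<le> probY n x f Y"
  unfolding probY_def using pi_l_gt_0 pi_l_lt_1 by (intro prod_nonneg) (auto simp: less_imp_le)

lemma expect_add: "expect n x f (\<lambda>Y. g Y + h Y) = expect n x f g + expect n x f h"
  unfolding expect_def by (simp add: sum.distrib algebra_simps)

lemma expect_cmult: "expect n x f (\<lambda>Y. c * g Y) = c * expect n x f g"
  unfolding expect_def by (simp add: sum_distrib_left algebra_simps)

lemma expect_sum: "expect n x f (\<lambda>Y. \<Sum>a\<in>A. g a Y) = (\<Sum>a\<in>A. expect n x f (g a))"
  unfolding expect_def by (simp add: sum_distrib_left sum.swap[of _ A])

lemma expect_mono:
  "(\<And>Y. Y \<in> outcomes n \<Longrightarrow> g Y \<le> h Y) \<Longrightarrow> expect n x f g \<le> expect n x f h"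
  unfolding expect_def by (intro sum_mono mult_left_mono probY_nonneg)

lemma expect_prod:
  "expect n x f (\<lambda>Y. \<Prod>i<n. q i (Y i))
     = (\<Prod>i<n. pi_l (f (x i)) * q i 1 + (1 - pi_l (f (x i))) * q i 0)"
proof -
  let ?w = "\<lambda>i y. (if y = 1 then pi_l (f (x i)) else 1 - pi_l (f (x i))) * q i y"
  have "expect n x f (\<lambda>Y. \<Prod>i<n. q i (Y i)) = (\<Sum>Y\<in>PiE {..<n} (\<lambda>_. {0, 1}). \<Prod>i<n. ?w i (Y i))"
    unfolding expect_def probY_def outcomes_def by (simp add: prod.distrib)
  also have "\<dots> = (\<Prod>i<n. \<Sum>y\<in>{0, 1}. ?w i y)"
    by (rule prod_sum_PiE[symmetric]) auto
  finally show ?thesis by (simp add: algebra_simps)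
qed

lemma expect_const: "expect n x f (\<lambda>Y. c) = c"
  using expect_prod[of n x f "\<lambda>_ _. 1"] expect_cmult[of n x f c "\<lambda>_. 1"] by simp

lemma expect_centered_product:
  fixes x :: "nat \<Rightarrow> 'x" and f :: "'x \<Rightarrow> real"
  assumes "i < n" "k < n"
  defines "p l \<equiv> pi_l (f (x l))"
  shows "expect n x f (\<lambda>Y. (Y i - p i) * (Y k - p k)) = (if i = k then p i * (1 - p i) else 0)"
proof -
  define q where "q l y = (if l = i then y - p i else 1) * (if l = k then y - p k else 1)" for l y
  have "(\<Prod>l<n. q l (Y l)) = (Y i - p i) * (Y k - p k)" for Y
    unfolding q_def using assms by (simp add: prod.distrib)
  then have "expect n x f (\<lambda>Y. (Y i - p i) * (Y k - p k))
      = (\<Prod>l<n. p l * q l 1 + (1 - p l) * q l 0)"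
    using expect_prod[of n x f q] by (simp add: p_def)
  also have "\<dots> = (if i = k then p i * (1 - p i) else 0)"
  proof (cases "i = k")
    case True
    then have "p l * q l 1 + (1 - p l) * q l 0 = (if l = i then p i * (1 - p i) else 1)" for l
      by (simp add: q_def power2_eq_square algebra_simps)
    with True assms show ?thesis by simp
  next
    case False
    then have "p i * q i 1 + (1 - p i) * q i 0 = 0" by (simp add: q_def algebra_simps)
    then have "(\<Prod>l<n. p l * q l 1 + (1 - p l) * q l 0) = 0"
      using assms by (intro prod_zero) auto
    with False show ?thesis by simp
  qed
  finally show ?thesis .
qed

lemma expect_centered_linear_sq_le:
  "expect n x f (\<lambda>Y. (\<Sum>i<n. (Y i - pi_l (f (x i))) * c i)^2) \<le> (\<Sum>i<n. (c i)^2)"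
proof -
  let ?p = "\<lambda>i. pi_l (f (x i))"
  have "expect n x f (\<lambda>Y. (\<Sum>i<n. (Y i - ?p i) * c i)^2)
      = expect n x f (\<lambda>Y. \<Sum>i<n. \<Sum>k<n. (c i * c k) * ((Y i - ?p i) * (Y k - ?p k)))"
    by (simp add: power2_eq_square sum_product algebra_simps)
  also have "\<dots> = (\<Sum>i<n. \<Sum>k<n. (c i * c k) * (if i = k then ?p i * (1 - ?p i) else 0))"
    by (simp add: expect_sum expect_cmult expect_centered_product)
  also have "\<dots> = (\<Sum>i<n. (c i)^2 * (?p i * (1 - ?p i)))"
    by (simp add: if_distrib power2_eq_square cong: if_cong)
  also have "\<dots> \<le> (\<Sum>i<n. (c i)^2)"
  proof (rule sum_mono)
    fix i
    have "?p i * (1 - ?p i) \<le> 1"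
      using pi_l_gt_0 pi_l_lt_1 by (intro mult_le_one) (auto simp: less_imp_le)
    then show "(c i)^2 * (?p i * (1 - ?p i)) \<le> (c i)^2"
      by (simp add: mult_left_le)
  qed
  finally show ?thesis .
qed

definition orthonormal_n :: "nat \<Rightarrow> (nat \<Rightarrow> 'x) \<Rightarrow> (nat \<Rightarrow> 'x \<Rightarrow> real) \<Rightarrow> nat set \<Rightarrow> bool" where
  "orthonormal_n n x phi m \<longleftrightarrow>
     (\<forall>j\<in>m. \<forall>k\<in>m. inner_n n x (phi j) (phi k) = (if j = k then 1 else 0))"

lemma inner_n_commute: "inner_n n x f g = inner_n n x g f"
  unfolding inner_n_def by (simp add: mult.commute)

lemma inner_n_sum_left:
  "inner_n n x (\<lambda>z. \<Sum>j\<in>m. c j * phi j z) g = (\<Sum>j\<in>m. c j * inner_n n x (phi j) g)"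
  unfolding inner_n_def by (simp add: sum_distrib_left sum_distrib_right sum.swap[of _ m] algebra_simps)

lemma orthonormal_n_coeff:
  assumes "orthonormal_n n x phi m" "finite m" "k \<in> m"
  shows "inner_n n x (\<lambda>z. \<Sum>j\<in>m. c j * phi j z) (phi k) = c k"
proof -
  have "(\<Sum>j\<in>m. c j * inner_n n x (phi j) (phi k)) = (\<Sum>j\<in>m. if j = k then c j else 0)"
    using assms unfolding orthonormal_n_def by (intro sum.cong) auto
  with assms show ?thesis by (simp add: inner_n_sum_left)
qed

lemma orthonormal_n_norm:
  assumes "orthonormal_n n x phi m" "finite m"
  shows "inner_n n x (\<lambda>z. \<Sum>j\<in>m. c j * phi j z) (\<lambda>z. \<Sum>j\<in>m. c j * phi j z) = (\<Sum>j\<in>m. (c j)^2)"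
proof -
  let ?f = "\<lambda>z. \<Sum>j\<in>m. c j * phi j z"
  have "inner_n n x ?f ?f = (\<Sum>j\<in>m. c j * inner_n n x ?f (phi j))"
    by (simp add: inner_n_sum_left inner_n_commute[of n x "phi _" ?f])
  also have "\<dots> = (\<Sum>j\<in>m. (c j)^2)"
    using assms by (simp add: orthonormal_n_coeff power2_eq_square)
  finally show ?thesis .
qed

lemma sum_apply: "(\<Sum>a\<in>A. f a) z = (\<Sum>a\<in>A. f a z)"
  by (induction A rule: infinite_finite_induct) auto

lemma D_m_orthonormal:
  assumes orth: "orthonormal_n n x phi m" and "finite m"
  shows "D_m phi m = card m"
proof -
  interpret V: vector_space "\<lambda>c (f::'x \<Rightarrow> real) z. c * f z"
    by unfold_locales (auto simp: fun_eq_iff algebra_simps)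
  have inj: "inj_on phi m"
  proof (rule inj_onI)
    fix j k assume "j \<in> m" "k \<in> m" "phi j = phi k"
    then show "j = k" using orth unfolding orthonormal_n_def by (metis one_neq_zero)
  qed
  have "\<not> V.dependent (phi ` m)"
  proof
    assume "V.dependent (phi ` m)"
    then obtain u where u: "\<exists>v\<in>phi ` m. u v \<noteq> 0" and "(\<Sum>v\<in>phi ` m. (\<lambda>z. u v * v z)) = 0"
      using V.dependent_finite \<open>finite m\<close> by blast
    then have "(\<Sum>v\<in>phi ` m. u v * v z) = 0" for z
      using sum_apply[of "\<lambda>v z. u v * v z" "phi ` m" z] by simp
    then have zero: "(\<lambda>z. \<Sum>j\<in>m. u (phi j) * phi j z) = (\<lambda>_. 0)"
      by (simp add: sum.reindex[OF inj])
    have "u (phi k) = 0" if "k \<in> m" for k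
      using orthonormal_n_coeff[OF orth \<open>finite m\<close> that, of "u \<circ> phi"]
      by (simp add: zero inner_n_def)
    with u show False by blast
  qed
  then have "D_m phi m = card (phi ` m)"
    unfolding D_m_def by (rule V.dim_eq_card_independent)
  with inj show ?thesis by (simp add: card_image)
qed

lemma expect_sum_sq_projections_le:
  assumes "orthonormal_n n x phi m" "finite m"
  shows "expect n x f (\<lambda>Y. \<Sum>j\<in>m. (\<Sum>i<n. (Y i - pi_l (f (x i))) * phi j (x i))^2)
           \<le> real n * real (card m)"
proof -
  have norm: "(\<Sum>i<n. (phi j (x i))^2) = real n" if "j \<in> m" for j
  proof (cases "n = 0")
    case False
    have "inner_n n x (phi j) (phi j) = 1" using assms that unfolding orthonormal_n_def by simp
    with False show ?thesis by (simp add: inner_n_def power2_eq_square)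
  qed simp
  have "(\<Sum>j\<in>m. expect n x f (\<lambda>Y. (\<Sum>i<n. (Y i - pi_l (f (x i))) * phi j (x i))^2))
      \<le> (\<Sum>j\<in>m. real n)"
  proof (rule sum_mono)
    fix j assume "j \<in> m"
    then show "expect n x f (\<lambda>Y. (\<Sum>i<n. (Y i - pi_l (f (x i))) * phi j (x i))^2) \<le> real n"
      using expect_centered_linear_sq_le[of n x f "\<lambda>i. phi j (x i)"] norm by simp
  qed
  then show ?thesis by (simp add: expect_sum mult.commute)
qed

lemma S_m_lincomb:
  assumes "f \<in> S_m phi m" "g \<in> S_m phi m"
  shows "(\<lambda>z. u * f z + v * g z) \<in> S_m phi m"
proof -
  obtain \<beta> \<gamma> where "f = (\<lambda>z. \<Sum>j\<in>m. \<beta> j * phi j z)" "g = (\<lambda>z. \<Sum>j\<in>m. \<gamma> j * phi j z)"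
    using assms unfolding S_m_def by blast
  then have "(\<lambda>z. u * f z + v * g z) = (\<lambda>z. \<Sum>j\<in>m. (u * \<beta> j + v * \<gamma> j) * phi j z)"
    by (simp add: sum_distrib_left sum.distrib algebra_simps)
  then show ?thesis unfolding S_m_def by (intro CollectI exI[of _ "\<lambda>j. u * \<beta> j + v * \<gamma> j"])
qed

lemma Linf_midpoint:
  assumes "f \<in> Linf n x C" "g \<in> Linf n x C"
  shows "(\<lambda>z. (f z + g z) / 2) \<in> Linf n x C"
  unfolding Linf_def
proof (intro CollectI allI impI)
  fix i assume "i < n"
  with assms have "\<bar>f (x i)\<bar> \<le> C" "\<bar>g (x i)\<bar> \<le> C" unfolding Linf_def by auto
  then show "\<bar>(f (x i) + g (x i)) / 2\<bar> \<le> C" by (auto simp: abs_le_iff)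
qed

lemma gamma_n_midpoint_strongly_convex:
  assumes "f \<in> Linf n x C" "g \<in> Linf n x C"
  shows "gamma_n n x Y (\<lambda>z. (f z + g z) / 2)
           \<le> (gamma_n n x Y f + gamma_n n x Y g) / 2 - dpi_l C / 8 * inner_n n x (f - g) (f - g)"
proof -
  let ?l = "\<lambda>i t. ln (1 + exp t) - Y i * t"
  let ?a = "\<lambda>i. f (x i)" and ?b = "\<lambda>i. g (x i)"
  have "(\<Sum>i<n. ?l i ((?a i + ?b i) / 2))
      \<le> (\<Sum>i<n. (?l i (?a i) + ?l i (?b i)) / 2 - dpi_l C / 8 * (?a i - ?b i)^2)"
  proof (rule sum_mono)
    fix i assume "i \<in> {..<n}"
    then have "ln (1 + exp ((?a i + ?b i) / 2))
        \<le> (ln (1 + exp (?a i)) + ln (1 + exp (?b i))) / 2 - dpi_l C / 8 * (?a i - ?b i)^2"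
      using assms unfolding Linf_def by (intro softplus_midpoint_strongly_convex) auto
    then show "?l i ((?a i + ?b i) / 2)
        \<le> (?l i (?a i) + ?l i (?b i)) / 2 - dpi_l C / 8 * (?a i - ?b i)^2"
      by (simp add: field_simps)
  qed
  also have "\<dots> = ((\<Sum>i<n. ?l i (?a i)) + (\<Sum>i<n. ?l i (?b i))) / 2
                    - dpi_l C / 8 * (\<Sum>i<n. (?a i - ?b i)^2)"
    by (simp add: sum_subtractf sum.distrib sum_divide_distrib[symmetric] sum_distrib_left)
  finally have "(\<Sum>i<n. ?l i ((?a i + ?b i) / 2)) / real n
      \<le> (((\<Sum>i<n. ?l i (?a i)) + (\<Sum>i<n. ?l i (?b i))) / 2
          - dpi_l C / 8 * (\<Sum>i<n. (?a i - ?b i)^2)) / real n"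
    by (rule divide_right_mono) simp
  moreover have "inner_n n x (f - g) (f - g) = (\<Sum>i<n. (?a i - ?b i)^2) / real n"
    by (simp add: inner_n_def power2_eq_square)
  ultimately show ?thesis
    unfolding gamma_n_def by (simp add: diff_divide_distrib add_divide_distrib)
qed

lemma ln_pi_l: "ln (pi_l t) = t - ln (1 + exp t)"
  by (simp add: pi_l_def ln_div)

lemma ln_one_minus_pi_l: "ln (1 - pi_l t) = - ln (1 + exp t)"
proof -
  have "1 - pi_l t = 1 / (1 + exp t)" by (simp add: pi_l_def field_simps)
  then show ?thesis by (simp add: ln_div)
qed

lemma KL_term_eq:
  "pi_l s * ln (pi_l s / pi_l t) + (1 - pi_l s) * ln ((1 - pi_l s) / (1 - pi_l t))
     = (ln (1 + exp t) - pi_l s * t) - (ln (1 + exp s) - pi_l s * s)"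
  using pi_l_gt_0[of s] pi_l_gt_0[of t] pi_l_lt_1[of s] pi_l_lt_1[of t, THEN less_imp_neq]
  by (simp add: ln_div ln_pi_l ln_one_minus_pi_l algebra_simps)

text \<open>This is \<open>\<K> = \<gamma>(f) - \<gamma>(f\<^sub>0)\<close>: the population contrast is the empirical one evaluated at the
  mean \<open>\<pi>\<^bsub>f\<^sub>0\<^esub>(x\<^sub>i)\<close> of the observations.\<close>
lemma KL_eq_gamma_n:
  "KL n x f0 f = gamma_n n x (\<lambda>i. pi_l (f0 (x i))) f - gamma_n n x (\<lambda>i. pi_l (f0 (x i))) f0"
  unfolding KL_def gamma_n_def by (simp add: KL_term_eq sum_subtractf right_diff_distrib)

lemma gamma_n_diff_change_obs:
  "gamma_n n x Z f - gamma_n n x Z g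
     = gamma_n n x Y f - gamma_n n x Y g + (\<Sum>i<n. (Y i - Z i) * (f (x i) - g (x i))) / real n"
  unfolding gamma_n_def
  by (simp add: sum_subtractf[symmetric] sum.distrib[symmetric] diff_divide_distrib
      add_divide_distrib[symmetric] algebra_simps)

lemma mult_sub_sq_le:
  fixes a c e :: real
  assumes "0 < a"
  shows "c * e - a * c^2 \<le> e^2 / (4 * a)"
proof -
  have "4 * a * (c * e - a * c^2) \<le> e^2"
    using zero_le_power2[of "e - 2 * a * c"] by (simp add: power2_eq_square algebra_simps)
  with assms show ?thesis by (simp add: field_simps)
qed

lemma gamma_n_minimizer_gap:
  assumes fhat: "fhat \<in> S_m phi m \<inter> Linf n x C"
    and fhat_min: "\<forall>t\<in>S_m phi m \<inter> Linf n x C. gamma_n n x Y fhat \<le> gamma_n n x Y t"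
    and g: "g \<in> S_m phi m \<inter> Linf n x C"
  shows "gamma_n n x Y fhat - gamma_n n x Y g \<le> - dpi_l C / 4 * inner_n n x (fhat - g) (fhat - g)"
proof -
  have "(\<lambda>z. (fhat z + g z) / 2) = (\<lambda>z. 1/2 * fhat z + 1/2 * g z)" by auto
  moreover have "(\<lambda>z. 1/2 * fhat z + 1/2 * g z) \<in> S_m phi m" using fhat g by (intro S_m_lincomb) auto
  moreover have "(\<lambda>z. (fhat z + g z) / 2) \<in> Linf n x C" using fhat g by (intro Linf_midpoint) auto
  ultimately have "(\<lambda>z. (fhat z + g z) / 2) \<in> S_m phi m \<inter> Linf n x C" by simp
  with fhat_min have "gamma_n n x Y fhat \<le> gamma_n n x Y (\<lambda>z. (fhat z + g z) / 2)" by blast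
  moreover have "gamma_n n x Y (\<lambda>z. (fhat z + g z) / 2)
      \<le> (gamma_n n x Y fhat + gamma_n n x Y g) / 2 - dpi_l C / 8 * inner_n n x (fhat - g) (fhat - g)"
    using fhat g by (intro gamma_n_midpoint_strongly_convex) auto
  ultimately show ?thesis by (simp add: field_simps)
qed

lemma KL_le_outcome:
  assumes orth: "orthonormal_n n x phi m" and "finite m"
    and fhat: "fhat \<in> S_m phi m \<inter> Linf n x C"
    and fhat_min: "\<forall>t\<in>S_m phi m \<inter> Linf n x C. gamma_n n x Y fhat \<le> gamma_n n x Y t"
    and g: "g \<in> S_m phi m \<inter> Linf n x C"
  shows "KL n x f0 fhat \<le> KL n x f0 g
           + (\<Sum>j\<in>m. (\<Sum>i<n. (Y i - pi_l (f0 (x i))) * phi j (x i))^2) / (dpi_l C * real n ^ 2)"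
proof -
  define U where "U = dpi_l C"
  define p where "p i = pi_l (f0 (x i))" for i
  define E where "E j = (\<Sum>i<n. (Y i - p i) * phi j (x i))" for j
  have U: "0 < U" unfolding U_def by (rule dpi_l_gt_0)
  have convex:
    "gamma_n n x Y fhat - gamma_n n x Y g \<le> - U / 4 * inner_n n x (fhat - g) (fhat - g)"
    using gamma_n_minimizer_gap[OF fhat fhat_min g] unfolding U_def .
  obtain c where c: "(\<lambda>z. 1 * fhat z + -1 * g z) = (\<lambda>z. \<Sum>j\<in>m. c j * phi j z)"
    using S_m_lincomb[of fhat phi m g 1 "-1"] fhat g unfolding S_m_def by auto
  then have diff: "fhat - g = (\<lambda>z. \<Sum>j\<in>m. c j * phi j z)" by (simp add: fun_diff_def)
  have "(\<Sum>i<n. (Y i - p i) * (fhat (x i) - g (x i)))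
      = (\<Sum>i<n. (Y i - p i) * (\<Sum>j\<in>m. c j * phi j (x i)))"
    using diff by (simp add: fun_eq_iff)
  also have "\<dots> = (\<Sum>j\<in>m. c j * E j)"
    unfolding E_def by (simp add: sum_distrib_left sum.swap[of _ m] algebra_simps)
  finally have noise: "(\<Sum>i<n. (Y i - p i) * (fhat (x i) - g (x i))) / real n
      = (\<Sum>j\<in>m. c j * (E j / real n))"
    by (simp add: sum_divide_distrib)
  have "KL n x f0 fhat - KL n x f0 g = gamma_n n x p fhat - gamma_n n x p g"
    unfolding KL_eq_gamma_n p_def by simp
  also have "\<dots> \<le> - U / 4 * (\<Sum>j\<in>m. (c j)^2) + (\<Sum>j\<in>m. c j * (E j / real n))"
    using convex gamma_n_diff_change_obs[of n x p fhat g Y] noise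
    by (simp add: diff orthonormal_n_norm[OF orth \<open>finite m\<close>])
  also have "\<dots> = (\<Sum>j\<in>m. c j * (E j / real n) - U / 4 * (c j)^2)"
    by (simp add: sum_subtractf sum_distrib_left sum_negf)
  also have "\<dots> \<le> (\<Sum>j\<in>m. (E j / real n)^2 / U)"
    using U by (intro sum_mono order_trans[OF mult_sub_sq_le]) auto
  also have "\<dots> = (\<Sum>j\<in>m. (E j)^2) / (U * real n ^ 2)"
    by (simp add: sum_divide_distrib power_divide mult.commute)
  finally show ?thesis unfolding E_def p_def U_def by simp
qed

theorem proposition3p1:
  fixes n M :: nat and x :: "nat \<Rightarrow> 'x" and f0 :: "'x \<Rightarrow> real"
    and phi :: "nat \<Rightarrow> 'x \<Rightarrow> real" and m :: "nat set" and C0 :: real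
    and fhat :: "(nat \<Rightarrow> real) \<Rightarrow> 'x \<Rightarrow> real" and fm :: "'x \<Rightarrow> real"
  assumes "n > 0"
    and orth: "\<forall>j\<in>{1..M}. \<forall>k\<in>{1..M}. inner_n n x (phi j) (phi k) = (if j = k then 1 else 0)"
    and "m \<subseteq> {1..M}"
    and "C0 > 0"
    and fhat_mem: "\<forall>Y\<in>outcomes n. fhat Y \<in> S_m phi m \<inter> Linf n x C0"
    and fhat_min: "\<forall>Y\<in>outcomes n. \<forall>t\<in>S_m phi m \<inter> Linf n x C0.
                     gamma_n n x Y (fhat Y) \<le> gamma_n n x Y t"
    and fm_mem: "fm \<in> S_m phi m \<inter> Linf n x C0"
    and fm_min: "\<forall>t\<in>S_m phi m \<inter> Linf n x C0. gamma n x f0 fm \<le> gamma n x f0 t"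
  shows "expect n x f0 (\<lambda>Y. KL n x f0 (fhat Y))
           \<le> KL n x f0 fm
             + real (D_m phi m) / (2 * real n * (exp C0 / (1 + exp C0)^2)^2)"
proof -
  define U where "U = dpi_l C0"
  define S where "S Y = (\<Sum>j\<in>m. (\<Sum>i<n. (Y i - pi_l (f0 (x i))) * phi j (x i))^2)" for Y
  have "finite m" using \<open>m \<subseteq> {1..M}\<close> finite_subset by blast
  have orth_m: "orthonormal_n n x phi m" using orth \<open>m \<subseteq> {1..M}\<close> unfolding orthonormal_n_def by blast
  have "expect n x f0 (\<lambda>Y. KL n x f0 (fhat Y)) \<le> expect n x f0 (\<lambda>Y. KL n x f0 fm + 1 / (U * real n ^ 2) * S Y)"
    using KL_le_outcome[OF orth_m \<open>finite m\<close>] fhat_mem fhat_min fm_mem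
    by (intro expect_mono) (simp add: U_def S_def)
  also have "\<dots> = KL n x f0 fm + 1 / (U * real n ^ 2) * expect n x f0 S"
    by (simp only: expect_add expect_const expect_cmult)
  also have "\<dots> \<le> KL n x f0 fm + 1 / (U * real n ^ 2) * (real n * real (card m))"
    using expect_sum_sq_projections_le[OF orth_m \<open>finite m\<close>, of f0] dpi_l_gt_0[of C0]
    unfolding S_def U_def by (intro add_left_mono mult_left_mono) auto
  also have "\<dots> = KL n x f0 fm + real (D_m phi m) / (U * real n)"
    using \<open>n > 0\<close> by (simp add: D_m_orthonormal[OF orth_m \<open>finite m\<close>] power2_eq_square)
  also have "\<dots> \<le> KL n x f0 fm + real (D_m phi m) / (2 * real n * U^2)"
    using \<open>n > 0\<close> dpi_l_gt_0[of C0] dpi_l_le_quarter[of C0]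
    by (intro add_left_mono divide_left_mono) (auto simp: U_def power2_eq_square)
  finally show ?thesis by (simp add: U_def dpi_l_def)
qed

end
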